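(* Let $f:\mathbb{R}\to\mathbb{R}$ be a Lebesgue measurable function such that $f(x+y)-f(x)-f(y)\in\pi\mathbb{Z}$ for almost every $(x,y)\in\mathbb{R}^2$ (with respect to Lebesgue measure on $\mathbb{R}^2$). Then there exist $c\in\mathbb{R}$ and a function $k:\mathbb{R}\to\pi\mathbb{Z}$ such that $f(x)=cx+k(x)$ for almost every $x\in\mathbb{R}$. *)

theory Defs
  imports "HOL-Analysis.Analysis"
begin

end

theory Submission
  imports Defs "HOL-Analysis.Analysis"
begin

text \<open>Put \<open>g = exp (2i f)\<close>. The hypothesis says that the unimodular measurable function \<open>g\<close> is
  multiplicative almost everywhere on \<open>\<real>\<^sup>2\<close>, hence by Fubini \<open>g (x + y) = g x g y\<close> for a.e. \<open>y\<close>,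
  for a.e. \<open>x\<close>. Integrating in \<open>y\<close> over a window \<open>[a, b]\<close> with \<open>\<integral>\<^sub>a\<^sup>b g \<noteq> 0\<close> shows that \<open>g\<close>
  agrees a.e. with the continuous function \<open>x \<mapsto> \<integral>\<^bsub>[x + a, x + b]\<^esub> g / \<integral>\<^sub>a\<^sup>b g\<close>, which is then an honest
  continuous character of \<open>\<real>\<close>, i.e. \<open>x \<mapsto> exp (i\<alpha>x)\<close>. Thus \<open>2 f x - \<alpha>x \<in> 2\<pi>\<int>\<close> almost everywhere.\<close>

lemma closure_AE_lebesgue:
  fixes P :: "'a::euclidean_space \<Rightarrow> bool"
  assumes "AE x in lebesgue. P x"
  shows "closure {x. P x} = UNIV"
proof -
  obtain N where N: "negligible N" "{x. \<not> P x} \<subseteq> N"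
    using assms eventually_ae_filter_negligible by blast
  have "interior (- {x. P x}) \<subseteq> N"
    using N(2) interior_subset by fastforce
  then have "interior (- {x. P x}) = {}"
    using N(1) negligible_subset open_interior open_not_negligible by blast
  then show ?thesis
    by (metis Compl_empty_eq double_compl interior_complement)
qed

lemma continuous_on_eq_on_dense:
  fixes f g :: "'a::topological_space \<Rightarrow> 'b::t2_space"
  assumes "continuous_on UNIV f" "continuous_on UNIV g"
    and "closure S = UNIV" "\<And>x. x \<in> S \<Longrightarrow> f x = g x"
  shows "f x = g x"
proof -
  have "closure S \<subseteq> {x. f x = g x}"
    using assms by (intro closure_minimal closed_Collect_eq) auto
  then show ?thesis
    using assms(3) by auto
qed

lemma continuous_on_AE_lebesgue_eq:
  fixes f g :: "'a::euclidean_space \<Rightarrow> 'b::t2_space"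
  assumes "continuous_on UNIV f" "continuous_on UNIV g" "AE x in lebesgue. f x = g x"
  shows "f x = g x"
  using continuous_on_eq_on_dense[OF assms(1,2) closure_AE_lebesgue[OF assms(3)]] by blast

lemma AE_lebesgue_translate:
  fixes P :: "'a::euclidean_space \<Rightarrow> bool"
  assumes "AE y in lebesgue. P y"
  shows "AE y in lebesgue. P (x + y)"
proof -
  obtain N where N: "negligible N" "{y. \<not> P y} \<subseteq> N"
    using assms eventually_ae_filter_negligible by blast
  have "{y. \<not> P (x + y)} \<subseteq> (+) (- x) ` N"
    using N(2) by (auto intro!: image_eqI[where x = "x + _"])
  then show ?thesis
    using negligible_translation[OF N(1), of "- x"]
    by (auto simp: eventually_ae_filter_negligible)
qed

lemma AE_lebesgue_pair:
  fixes P :: "'a::euclidean_space \<Rightarrow> 'b::euclidean_space \<Rightarrow> bool"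
  assumes "AE p in lebesgue. P (fst p) (snd p)"
  shows "AE x in lebesgue. AE y in lebesgue. P x y"
proof -
  have "AE p in (lborel \<Otimes>\<^sub>M lborel :: ('a \<times> 'b) measure). P (fst p) (snd p)"
    using assms by (subst lborel_prod) (simp add: AE_completion_iff)
  then have "AE x in lborel. AE y in lborel. P x y"
    using lborel_pair.AE_pair by fastforce
  then show ?thesis
    by (simp add: AE_completion_iff)
qed

lemma additive_continuous_imp_scaleR:
  fixes M :: "real \<Rightarrow> 'a::real_normed_vector"
  assumes add: "\<And>x y. M (x + y) = M x + M y" and cont: "continuous_on UNIV M"
  shows "M x = x *\<^sub>R M 1"
proof -
  interpret Modules.additive M by unfold_locales (rule add)
  have nat: "M (of_nat n * y) = of_nat n *\<^sub>R M y" for n y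
    by (induction n) (simp_all add: zero add distrib_right scaleR_left_distrib)
  have int: "M (of_int k * y) = of_int k *\<^sub>R M y" for k y
  proof (cases "k \<ge> 0")
    case True
    then show ?thesis using nat[of "nat k" y] by simp
  next
    case False
    then have "of_int k * y = - (of_nat (nat (- k)) * y)" by simp
    then show ?thesis using nat[of "nat (- k)" y] False by (simp add: minus)
  qed
  have rat: "M q = q *\<^sub>R M 1" if q: "q \<in> \<rat>" for q
  proof -
    obtain a b where ab: "b > 0" "q = of_int a / of_int b"
      using Rats_cases'[OF q] by metis
    have "M q = inverse (of_int b) *\<^sub>R (of_int b *\<^sub>R M q)"
      using ab(1) by simp
    also have "of_int b *\<^sub>R M q = M (of_int b * q)"
      by (simp add: int)
    also have "of_int b * q = of_int a * 1"
      using ab by simp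
    also have "M (of_int a * 1) = of_int a *\<^sub>R M 1"
      by (rule int)
    finally show ?thesis
      using ab(2) by (simp add: divide_inverse mult.commute)
  qed
  have "continuous_on UNIV (\<lambda>x. x *\<^sub>R M 1)"
    by (intro continuous_intros)
  then show ?thesis
    using continuous_on_eq_on_dense[OF cont _ Rats_closure_real] rat by blast
qed

lemma continuous_Ints_valued_imp_eq:
  fixes F :: "'a::topological_space \<Rightarrow> 'b::real_normed_algebra_1"
  assumes "connected S" "continuous_on S F" "\<And>x. x \<in> S \<Longrightarrow> F x \<in> \<int>"
    and "x \<in> S" "y \<in> S"
  shows "F x = F y"
proof -
  have "F constant_on S"
  proof (rule continuous_discrete_range_constant[OF assms(1,2)])
    fix u assume u: "u \<in> S"
    show "\<exists>e>0. \<forall>v. v \<in> S \<and> F v \<noteq> F u \<longrightarrow> e \<le> norm (F v - F u)"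
    proof (intro exI[of _ 1] conjI allI impI)
      fix v assume v: "v \<in> S \<and> F v \<noteq> F u"
      obtain m n :: int where mn: "F v = of_int m" "F u = of_int n"
        using assms(3) u v by (metis Ints_cases)
      have "norm (F v - F u) = of_int \<bar>m - n\<bar>"
        unfolding mn of_int_diff[symmetric] norm_of_int by simp
      moreover have "m \<noteq> n"
        using v mn by auto
      ultimately show "1 \<le> norm (F v - F u)"
        by simp
    qed simp
  qed
  then show ?thesis
    using assms(4,5) by (auto simp: constant_on_def)
qed

text \<open>The defect \<open>(L (x + y) - L x - L y) / 2\<pi>i\<close> is continuous in \<open>y\<close> and integer valued,
  hence constant.\<close>

lemma continuous_exp_lift_additive:
  fixes L :: "'a::real_normed_vector \<Rightarrow> complex"
  assumes cont: "continuous_on UNIV L" and L0: "L 0 = 0"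
    and mult: "\<And>x y. exp (L (x + y)) = exp (L x) * exp (L y)"
  shows "L (x + y) = L x + L y"
proof -
  define F where "F y = (L (x + y) - L x - L y) / (2 * of_real pi * \<i>)" for y
  have "F y \<in> \<int>" for y
  proof -
    have "exp (L (x + y)) = exp (L x + L y)"
      using mult by (simp add: exp_add)
    then obtain n :: int where "L (x + y) = L x + L y + of_int (2 * n) * pi * \<i>"
      unfolding exp_eq by blast
    then show ?thesis
      unfolding F_def by (simp add: field_simps)
  qed
  moreover have "continuous_on UNIV F"
    unfolding F_def by (intro continuous_intros continuous_on_compose2[OF cont]) auto
  ultimately have "F y = F 0"
    using continuous_Ints_valued_imp_eq[OF connected_UNIV] by blast
  then show ?thesis
    using L0 unfolding F_def by (simp add: diff_eq_eq add.commute)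
qed

lemma continuous_unimodular_character_eq_exp:
  fixes G :: "real \<Rightarrow> complex"
  assumes cont: "continuous_on UNIV G" and mult: "\<And>x y. G (x + y) = G x * G y"
    and unimodular: "\<And>x. norm (G x) = 1"
  obtains \<alpha> where "\<And>x. G x = exp (\<i> * of_real (\<alpha> * x))"
proof -
  have nonzero: "G x \<noteq> 0" for x
    using unimodular[of x] by auto
  have "G 0 * G 0 = G 0 * 1"
    using mult[of 0 0] by (metis add_0 mult_1_right)
  then have G0: "G 0 = 1"
    using nonzero[of 0] by simp
  obtain L where L: "continuous_on UNIV L" "\<And>x. G x = exp (L x)"
    using continuous_logarithm_on_contractible[OF cont _ nonzero]
    by (metis UNIV_I convex_UNIV convex_imp_contractible)
  define M where "M x = L x - L 0" for x
  have "exp (L 0) = 1"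
    using G0 L(2) by metis
  then have GM: "G x = exp (M x)" for x
    unfolding M_def exp_diff using L(2) by simp
  have M_cont: "continuous_on UNIV M"
    unfolding M_def using L(1) by (intro continuous_intros)
  have M_add: "M (x + y) = M x + M y" for x y
  proof (rule continuous_exp_lift_additive[OF M_cont])
    show "M 0 = 0"
      by (simp add: M_def)
    show "exp (M (x + y)) = exp (M x) * exp (M y)" for x y
      by (simp add: mult flip: GM)
  qed
  have M: "M x = x *\<^sub>R M 1" for x
    by (rule additive_continuous_imp_scaleR[OF M_add M_cont])
  define \<alpha> where "\<alpha> = Im (M 1)"
  have "exp (Re (M 1)) = 1"
    using unimodular[of 1] by (simp add: GM norm_exp_eq_Re)
  then have M1: "M 1 = \<i> * of_real \<alpha>"
    by (simp add: \<alpha>_def complex_eq_iff)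
  have "G x = exp (\<i> * of_real (\<alpha> * x))" for x
    using GM[of x] M[of x] M1 by (simp add: scaleR_conv_of_real algebra_simps)
  then show ?thesis
    using that by blast
qed

text \<open>By Lebesgue's differentiation theorem the averages of \<open>g\<close> over \<open>[x, x + h]\<close> tend to
  \<open>g x \<noteq> 0\<close> for almost every \<open>x\<close>.\<close>

lemma exists_interval_integral_nonzero:
  fixes g :: "real \<Rightarrow> 'a::euclidean_space"
  assumes integrable: "\<And>a b. g integrable_on {a..b}" and nonzero: "\<And>x. g x \<noteq> 0"
  obtains a b where "a \<le> b" "integral {a..b} g \<noteq> 0"
proof -
  obtain N where N: "negligible N"
    "\<And>x e. \<lbrakk>x \<notin> N; 0 < e\<rbrakk> \<Longrightarrow> \<exists>d>0. \<forall>h. 0 < h \<and> h < d \<longrightarrow>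
             norm (integral (cbox x (x + h *\<^sub>R One)) g /\<^sub>R h ^ DIM(real) - g x) < e"
    using integrable_ccontinuous_explicit[of g] integrable by (metis cbox_interval)
  have "N \<noteq> UNIV"
    using N(1) open_not_negligible[of UNIV] by auto
  then obtain x where "x \<notin> N"
    by auto
  then obtain d where d: "d > 0" "\<And>h. 0 < h \<and> h < d \<Longrightarrow>
      norm (integral {x..x + h} g /\<^sub>R h - g x) < norm (g x)"
    using N(2)[of x "norm (g x)"] nonzero[of x] by auto
  have "integral {x..x + d/2} g \<noteq> 0"
    using d(2)[of "d/2"] d(1) by auto
  moreover have "x \<le> x + d/2"
    using d(1) by simp
  ultimately show ?thesis
    using that by blast
qed

lemma continuous_on_integral_translated_interval:
  fixes g :: "real \<Rightarrow> 'a::euclidean_space"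
  assumes integrable: "\<And>a b. g integrable_on {a..b}" and "a \<le> b"
  shows "continuous_on UNIV (\<lambda>x. integral {x + a..x + b} g)"
proof -
  have "isCont (\<lambda>x. integral {x + a..x + b} g) x0" for x0
  proof (unfold continuous_at_eps_delta, intro allI impI)
    fix e :: real assume e: "e > 0"
    obtain \<delta> where \<delta>: "0 < \<delta>"
      "\<And>c' d'. \<lbrakk>c' \<in> cbox (x0 + a - 1) (x0 + b + 1); d' \<in> cbox (x0 + a - 1) (x0 + b + 1);
                 norm (c' - (x0 + a)) \<le> \<delta>; norm (d' - (x0 + b)) \<le> \<delta>\<rbrakk>
                 \<Longrightarrow> norm (integral (cbox c' d') g - integral (cbox (x0 + a) (x0 + b)) g) < e"
      using indefinite_integral_continuous[of g "x0 + a - 1" "x0 + b + 1" "x0 + a" "x0 + b" e]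
        integrable \<open>a \<le> b\<close> e by auto
    show "\<exists>d>0. \<forall>x. dist x x0 < d \<longrightarrow>
            dist (integral {x + a..x + b} g) (integral {x0 + a..x0 + b} g) < e"
    proof (intro exI[of _ "min \<delta> 1"] conjI allI impI)
      fix x assume "dist x x0 < min \<delta> 1"
      then have "\<bar>x - x0\<bar> < \<delta>" "\<bar>x - x0\<bar> < 1"
        by (auto simp: dist_real_def)
      then show "dist (integral {x + a..x + b} g) (integral {x0 + a..x0 + b} g) < e"
        using \<delta>(2)[of "x + a" "x + b"] \<open>a \<le> b\<close> by (auto simp: dist_norm)
    qed (use \<delta> in auto)
  qed
  then show ?thesis
    by (simp add: continuous_on_eq_continuous_at)
qed

text \<open>Off a null set of \<open>x\<close>, \<open>\<integral>\<^bsub>[x + a, x + b]\<^esub> g = g x \<cdot> \<integral>\<^bsub>[a, b]\<^esub> g\<close>.\<close>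

lemma AE_multiplicative_imp_AE_eq_continuous:
  fixes g :: "real \<Rightarrow> complex"
  assumes integrable: "\<And>a b. g integrable_on {a..b}" and nonzero: "\<And>x. g x \<noteq> 0"
    and mult: "AE x in lebesgue. AE y in lebesgue. g (x + y) = g x * g y"
  obtains G where "continuous_on UNIV G" "AE x in lebesgue. G x = g x"
proof -
  obtain a b where ab: "a \<le> b" "integral {a..b} g \<noteq> 0"
    using exists_interval_integral_nonzero[OF integrable nonzero] by blast
  define G where "G x = integral {x + a..x + b} g / integral {a..b} g" for x
  have "continuous_on UNIV G"
    unfolding G_def
    by (intro continuous_intros continuous_on_integral_translated_interval integrable ab(1))
      (use ab(2) in auto)
  moreover have "AE x in lebesgue. G x = g x"
    using mult
  proof (rule eventually_mono)
    fix x assume "AE y in lebesgue. g (x + y) = g x * g y"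
    then obtain N where N: "negligible N" "\<And>y. y \<notin> N \<Longrightarrow> g (x + y) = g x * g y"
      unfolding eventually_ae_filter_negligible by blast
    have "integral {x + a..x + b} g = integral {a..b} (\<lambda>y. g (x + y))"
      using integral_shift_Icc_real[of a b g x] by (simp add: comp_def add.commute)
    also have "\<dots> = integral {a..b} (\<lambda>y. g x * g y)"
      by (rule integral_spike[OF N(1)]) (use N(2) in auto)
    finally show "G x = g x"
      using ab(2) by (simp add: G_def)
  qed
  ultimately show ?thesis
    using that by blast
qed

lemma continuous_AE_multiplicative_imp_multiplicative:
  fixes G :: "'a::euclidean_space \<Rightarrow> 'b::real_normed_algebra"
  assumes cont: "continuous_on UNIV G"
    and mult: "AE x in lebesgue. AE y in lebesgue. G (x + y) = G x * G y"
  shows "G (x + y) = G x * G y"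
proof -
  have translate: "continuous_on UNIV (\<lambda>y. G (x + y))" for x
    by (rule continuous_on_compose2[OF cont]) (auto intro!: continuous_intros)
  have product: "continuous_on UNIV (\<lambda>y. G x * G y)" for x
    by (intro continuous_intros cont)
  have "AE x in lebesgue. G (x + y) = G x * G y"
    using mult
  proof (rule eventually_mono)
    fix x assume "AE y in lebesgue. G (x + y) = G x * G y"
    then show "G (x + y) = G x * G y"
      by (rule continuous_on_AE_lebesgue_eq[of "\<lambda>y. G (x + y)" "\<lambda>y. G x * G y",
            OF translate product])
  qed
  moreover have "continuous_on UNIV (\<lambda>x. G (x + y))" "continuous_on UNIV (\<lambda>x. G x * G y)"
    using translate[of y] by (simp_all add: add.commute continuous_intros cont)
  ultimately show ?thesis
    using continuous_on_AE_lebesgue_eq[of "\<lambda>x. G (x + y)" "\<lambda>x. G x * G y"] by blast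
qed

lemma AE_multiplicative_unimodular_eq_exp:
  fixes g :: "real \<Rightarrow> complex"
  assumes measurable: "g \<in> borel_measurable lebesgue" and unimodular: "\<And>x. norm (g x) = 1"
    and mult: "AE x in lebesgue. AE y in lebesgue. g (x + y) = g x * g y"
  obtains \<alpha> where "AE x in lebesgue. g x = exp (\<i> * of_real (\<alpha> * x))"
proof -
  have "g integrable_on {a..b}" for a b
    by (rule measurable_bounded_by_integrable_imp_integrable[where g = "\<lambda>_. 1"])
      (use measurable unimodular in \<open>auto intro: measurable_restrict_space1\<close>)
  moreover have "g x \<noteq> 0" for x
    using unimodular[of x] by auto
  ultimately obtain G where G: "continuous_on UNIV G" "AE x in lebesgue. G x = g x"
    using AE_multiplicative_imp_AE_eq_continuous mult by blast
  have "AE x in lebesgue. AE y in lebesgue. G (x + y) = G x * G y"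
    using mult G(2)
  proof eventually_elim
    case (elim x)
    show ?case
      using elim(1) G(2) AE_lebesgue_translate[OF G(2), of x]
      by eventually_elim (simp add: elim(2))
  qed
  then have "G (x + y) = G x * G y" for x y
    by (rule continuous_AE_multiplicative_imp_multiplicative[OF G(1)])
  moreover have "norm (G x) = 1" for x
  proof (rule continuous_on_AE_lebesgue_eq[of "\<lambda>x. norm (G x)" "\<lambda>_. 1"])
    show "AE x in lebesgue. norm (G x) = 1"
      using G(2) by eventually_elim (simp add: unimodular)
  qed (intro continuous_intros G(1))+
  ultimately obtain \<alpha> where \<alpha>: "\<And>x. G x = exp (\<i> * of_real (\<alpha> * x))"
    using continuous_unimodular_character_eq_exp[OF G(1)] by blast
  have "AE x in lebesgue. g x = exp (\<i> * of_real (\<alpha> * x))"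
    using G(2) by eventually_elim (simp add: \<alpha>)
  then show ?thesis
    by (rule that)
qed

lemma exp_ii_double_eq_iff:
  "exp (\<i> * of_real (2 * s)) = exp (\<i> * of_real (2 * t)) \<longleftrightarrow> s - t \<in> {pi * of_int m | m. True}"
proof -
  have "\<i> * of_real (2 * s) = \<i> * of_real (2 * t) + of_int (2 * n) * pi * \<i> \<longleftrightarrow> s - t = pi * n"
    for n :: int
    by (auto simp: complex_eq_iff algebra_simps)
  then show ?thesis
    by (auto simp: exp_eq)
qed

lemma AE_diff_in_imp_ex_remainder:
  fixes f h :: "'a \<Rightarrow> 'b::ab_group_add"
  assumes "AE x in M. f x - h x \<in> S" "s \<in> S"
  shows "\<exists>k. (\<forall>x. k x \<in> S) \<and> (AE x in M. f x = h x + k x)"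
proof (intro exI conjI allI)
  let ?k = "\<lambda>x. if f x - h x \<in> S then f x - h x else s"
  show "?k x \<in> S" for x
    using assms(2) by simp
  show "AE x in M. f x = h x + ?k x"
    using assms(1) by eventually_elim simp
qed

theorem lemma4:
  fixes f :: "real \<Rightarrow> real"
  assumes "f \<in> borel_measurable lebesgue"
    and "AE p in (lebesgue :: (real \<times> real) measure).
           f (fst p + snd p) - f (fst p) - f (snd p) \<in> {pi * of_int m | m. True}"
  shows "\<exists>(c::real) (k::real \<Rightarrow> real). (\<forall>x. k x \<in> {pi * of_int m | m. True}) \<and>
           (AE x in lebesgue. f x = c * x + k x)"
proof -
  define g where "g x = exp (\<i> * of_real (2 * f x))" for x
  have "g \<in> borel_measurable lebesgue"
    unfolding g_def using assms(1) by measurable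
  moreover have "norm (g x) = 1" for x
    by (simp add: g_def)
  moreover have "g (x + y) = g x * g y \<longleftrightarrow> f (x + y) - f x - f y \<in> {pi * of_int m | m. True}"
    for x y
    unfolding g_def diff_diff_eq exp_ii_double_eq_iff[symmetric] by (simp add: distrib_left exp_add)
  then have "AE x in lebesgue. AE y in lebesgue. g (x + y) = g x * g y"
    using AE_lebesgue_pair[OF assms(2)] by simp
  ultimately obtain \<alpha> where "AE x in lebesgue. g x = exp (\<i> * of_real (\<alpha> * x))"
    using AE_multiplicative_unimodular_eq_exp by blast
  moreover have "g x = exp (\<i> * of_real (\<alpha> * x)) \<longleftrightarrow> f x - \<alpha> / 2 * x \<in> {pi * of_int m | m. True}"
    for x
    unfolding g_def exp_ii_double_eq_iff[symmetric] by simp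
  ultimately have "AE x in lebesgue. f x - \<alpha> / 2 * x \<in> {pi * of_int m | m. True}"
    by simp
  moreover have "0 \<in> {pi * of_int m | m. True}"
    by (auto intro: exI[of _ 0])
  ultimately show ?thesis
    using AE_diff_in_imp_ex_remainder[where h = "\<lambda>x. \<alpha> / 2 * x"] by blast
qed

end
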